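(* Let $\hat P=\mathrm{Spec}(B)\not\simeq S\times\mathbb{G}_a$ be an affine extension of the trivial bundle $S_*\times\mathbb{G}_a$ to which the vertical $\mathbb{G}_m$-action extends. Then $B=\mathcal O(S)\oplus\bigoplus_{\nu\ge1}\mathfrak m_\nu t^\nu\subset\mathcal O(S)[t]$ for a decreasing sequence $(\mathfrak m_\nu)_{\nu\ge1}$ of $\mathfrak m_{\mathbf x}$-primary ideals of $\mathcal O(S)$. Consequently (Corollary) $\hat P$ is of the second kind.
   Context: All varieties are over $\mathbb{C}$. $S$ is a normal affine surface, $\mathbf{x}\in S$ a closed regular point with maximal ideal $\mathfrak m_{\mathbf x}\subset\mathcal O(S)$, $S_*=S\setminus\{\mathbf{x}\}$. An affine extension of a principal $\mathbb{G}_a$-bundle $\pi\colon P\to S_*$ is a normal affine $\mathbb{G}_a$-variety $\hat P=\mathrm{Spec}(B)$ with a morphism $\hat\pi\colon\hat P\to S$ and a $\mathbb{G}_a$-equivariant dominant open embedding $\iota\colon P\hookrightarrow\hat P$ with $\iota(P)=\hat\pi^{-1}(S_* )$ and $\hat\pi\circ\iota=\pi$; $B\subset\mathcal O(P)$ via $\iota^*$. For $P=S_*\times\mathbb{G}_a$ (translation action), $\mathcal O(P)=\mathcal O(S)[t]$; the vertical $\mathbb{G}_m$-action is $\lambda\cdot(s,t)=(s,\lambda t)$. The extension is of the second kind if the morphism $j\colon S\times\mathbb G_a\to\hat P$ with $j^*=\iota^*$ maps $\{\mathbf x\}\times\mathbb G_a$ to a point. *)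

theory Defs
  imports Complex_Main "HOL-Computational_Algebra.Polynomial"
begin

text \<open>Commutative algebra over a base field embedded via a ring homomorphism
  k :: complex => 'b.  The coordinate ring O(S) is the whole type 'a, and
  O(S)[t] is 'a poly.\<close>

definition is_ring_hom_C :: "(complex \<Rightarrow> 'b::comm_ring_1) \<Rightarrow> bool" where
  "is_ring_hom_C k \<longleftrightarrow> k 1 = 1 \<and> (\<forall>x y. k (x + y) = k x + k y) \<and> (\<forall>x y. k (x * y) = k x * k y)"

inductive_set subalg_gen :: "(complex \<Rightarrow> 'b::comm_ring_1) \<Rightarrow> 'b set \<Rightarrow> 'b set"
  for k :: "complex \<Rightarrow> 'b" and G :: "'b set" where
  gen: "g \<in> G \<Longrightarrow> g \<in> subalg_gen k G"
| const: "k z \<in> subalg_gen k G"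
| add: "x \<in> subalg_gen k G \<Longrightarrow> y \<in> subalg_gen k G \<Longrightarrow> x + y \<in> subalg_gen k G"
| mult: "x \<in> subalg_gen k G \<Longrightarrow> y \<in> subalg_gen k G \<Longrightarrow> x * y \<in> subalg_gen k G"

definition fg_algebra :: "(complex \<Rightarrow> 'b::comm_ring_1) \<Rightarrow> 'b set \<Rightarrow> bool" where
  "fg_algebra k R \<longleftrightarrow> (\<exists>G. finite G \<and> G \<subseteq> R \<and> subalg_gen k G = R)"

text \<open>A subring R of a domain is integrally closed in its field of fractions:
  if a/b (a, b in R, b nonzero) satisfies a monic equation over R, then b divides a in R.\<close>
definition integrally_closed :: "'b::idom set \<Rightarrow> bool" where
  "integrally_closed R \<longleftrightarrow>
     (\<forall>a\<in>R. \<forall>b\<in>R. b \<noteq> 0 \<longrightarrow>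
        (\<exists>n>0. \<exists>cs. (\<forall>i. cs i \<in> R) \<and> a ^ n + (\<Sum>i=1..n. cs i * a ^ (n - i) * b ^ i) = 0)
        \<longrightarrow> (\<exists>q\<in>R. a = q * b))"

definition is_ideal :: "'a::comm_ring_1 set \<Rightarrow> bool" where
  "is_ideal I \<longleftrightarrow> 0 \<in> I \<and> (\<forall>x\<in>I. \<forall>y\<in>I. x + y \<in> I) \<and> (\<forall>r. \<forall>x\<in>I. r * x \<in> I)"

definition prime_ideal :: "'a::comm_ring_1 set \<Rightarrow> bool" where
  "prime_ideal P \<longleftrightarrow> is_ideal P \<and> P \<noteq> UNIV \<and> (\<forall>x y. x * y \<in> P \<longrightarrow> x \<in> P \<or> y \<in> P)"

definition maximal_ideal :: "'a::comm_ring_1 set \<Rightarrow> bool" where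
  "maximal_ideal m \<longleftrightarrow> is_ideal m \<and> m \<noteq> UNIV \<and>
     (\<forall>I. is_ideal I \<longrightarrow> m \<subseteq> I \<longrightarrow> I = m \<or> I = UNIV)"

text \<open>A chain of prime ideals P0 < P1 < ... < Pn (a list of n+1 primes has length n).\<close>
definition prime_chain :: "'a::comm_ring_1 set list \<Rightarrow> bool" where
  "prime_chain ps \<longleftrightarrow> ps \<noteq> [] \<and> (\<forall>P\<in>set ps. prime_ideal P) \<and> sorted_wrt (\<subset>) ps"

definition krull_dim_is :: "'a::comm_ring_1 itself \<Rightarrow> nat \<Rightarrow> bool" where
  "krull_dim_is (T::'a itself) n \<longleftrightarrow>
     (\<exists>ps::'a set list. prime_chain ps \<and> length ps = n + 1) \<and>
     (\<forall>ps::'a set list. prime_chain ps \<longrightarrow> length ps \<le> n + 1)"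

definition height_is :: "'a::comm_ring_1 set \<Rightarrow> nat \<Rightarrow> bool" where
  "height_is P n \<longleftrightarrow>
     (\<exists>ps. prime_chain ps \<and> last ps = P \<and> length ps = n + 1) \<and>
     (\<forall>ps. prime_chain ps \<longrightarrow> last ps = P \<longrightarrow> length ps \<le> n + 1)"

definition ideal_sq :: "'a::comm_ring_1 set \<Rightarrow> 'a set" where
  "ideal_sq m = {(\<Sum>i<(n::nat). a i * b i) | n a b. \<forall>i<n. a i \<in> m \<and> b i \<in> m}"

text \<open>The closed point with maximal ideal m is regular: the local ring at m is regular,
  i.e. dim_{A/m} (m/m^2) equals dim A_m = height m.\<close>
definition regular_point :: "'a::comm_ring_1 set \<Rightarrow> bool" where
  "regular_point m \<longleftrightarrow> (\<exists>n us. height_is m n \<and> length us = n \<and> set us \<subseteq> m \<and>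
     (\<forall>y\<in>m. \<exists>as. length as = n \<and> y - (\<Sum>i<n. as ! i * us ! i) \<in> ideal_sq m) \<and>
     (\<forall>as. length as = n \<longrightarrow> (\<Sum>i<n. as ! i * us ! i) \<in> ideal_sq m \<longrightarrow> set as \<subseteq> m))"

definition radical :: "'a::comm_ring_1 set \<Rightarrow> 'a set" where
  "radical I = {x. \<exists>n. x ^ n \<in> I}"

definition primary_to :: "'a::comm_ring_1 set \<Rightarrow> 'a set \<Rightarrow> bool" where
  "primary_to m Q \<longleftrightarrow> is_ideal Q \<and> Q \<noteq> UNIV \<and>
     (\<forall>x y. x * y \<in> Q \<longrightarrow> x \<notin> Q \<longrightarrow> (\<exists>n. y ^ n \<in> Q)) \<and> radical Q = m"

definition affine_extension_trivial :: "(complex \<Rightarrow> 'a::idom) \<Rightarrow> 'a set \<Rightarrow> 'a poly set \<Rightarrow> bool" where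
  "affine_extension_trivial c m B \<longleftrightarrow>
     fg_algebra (\<lambda>z. [:c z:]) B \<and>
     integrally_closed B \<and>
     (\<forall>a. [:a:] \<in> B) \<and>
     (\<forall>p\<in>B. \<forall>z. pcompose p [:c z, 1:] \<in> B) \<and>
     (\<forall>f\<in>m. \<forall>p. \<exists>n. smult (f ^ n) p \<in> B)"

text \<open>The vertical G_m-action lambda.(s,t) = (s, lambda t) extends to Spec B.\<close>
definition vertical_Gm_extends :: "(complex \<Rightarrow> 'a::idom) \<Rightarrow> 'a poly set \<Rightarrow> bool" where
  "vertical_Gm_extends c B \<longleftrightarrow> (\<forall>p\<in>B. \<forall>z. z \<noteq> 0 \<longrightarrow> pcompose p [:0, c z:] \<in> B)"

text \<open>Second kind: j maps {x} x G_a to a point, i.e. the composite B -> O(S)[t] -> (O(S)/m)[t]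
  lands in the constants.\<close>
definition second_kind :: "'a::idom set \<Rightarrow> 'a poly set \<Rightarrow> bool" where
  "second_kind m B \<longleftrightarrow> (\<forall>p\<in>B. \<forall>n\<ge>1. coeff p n \<in> m)"

end

theory Submission
  imports Defs
begin

(* B is a C-subalgebra of O(S)[t] containing O(S), stable under the
   translations t -> t + c z and (by hypothesis) under the dilations t -> c z * t.
   1. Weight decomposition: the dilation t -> 2t acts on monom a n with eigenvalue 2^n;
      since nonzero integers are invertible in O(S) (O(S) is a C-algebra), a product of
      the operators (dilation - 2^j) isolates each homogeneous component, so B contains
      the components of its elements.  Hence B = O(S) + sum of M_nu t^nu, where
      M_nu = {a. a t^nu in B}, and each M_nu is an ideal.
   2. Translation t -> t + 1 maps a t^(nu+1) to a (t+1)^(nu+1), whose t^nu component is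
      (nu+1) a t^nu; so M_(nu+1) <= M_nu.
   3. M_1 is proper (else t in B and B = O(S)[t]), so all M_nu (nu >= 1) are proper; the
      localisation property of the extension gives m <= rad M_nu; and a proper ideal whose
      radical contains a maximal ideal m is m-primary.
   4. Second kind: every coefficient of weight nu >= 1 lies in M_nu <= rad M_nu = m. *)

section \<open>Consequences of the C-algebra structure\<close>

text \<open>A ring homomorphism from C fixes the integers; in particular nonzero integers
  become units, which is all we need of the base field.\<close>

lemma ring_hom_C_of_int:
  assumes hom: "is_ring_hom_C c"
  shows "c (of_int k) = of_int k"
proof -
  have add: "\<And>x y. c (x + y) = c x + c y" and one: "c 1 = 1"
    using hom unfolding is_ring_hom_C_def by auto
  have zero: "c 0 = 0" using add[of 0 0] by simp
  have neg: "c (- x) = - c x" for x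
    using add[of x "- x"] zero by (simp add: eq_neg_iff_add_eq_0 add.commute)
  have nat: "c (of_nat n) = of_nat n" for n
    by (induction n) (simp_all add: zero add one)
  show ?thesis
  proof (cases "k \<ge> 0")
    case True
    then show ?thesis using nat[of "nat k"] by (metis of_int_of_nat_eq nat_0_le)
  next
    case False
    then have "k = - of_nat (nat (- k))" by simp
    then show ?thesis using neg[of "of_nat (nat (- k))"] nat[of "nat (- k)"] by (metis of_int_minus of_int_of_nat_eq)
  qed
qed

lemma ring_hom_C_int_unit:
  fixes c :: "complex \<Rightarrow> 'a::comm_ring_1"
  assumes hom: "is_ring_hom_C c" and K: "K \<noteq> 0"
  shows "\<exists>u::'a. u * of_int K = 1"
proof
  have "c (1 / of_int K * of_int K) = 1" using K hom unfolding is_ring_hom_C_def by simp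
  then show "c (1 / of_int K) * of_int K = 1"
    using hom ring_hom_C_of_int[OF hom, of K] unfolding is_ring_hom_C_def by metis
qed

section \<open>Primary ideals belonging to a maximal ideal\<close>

text \<open>If the radical of Q contains the maximal ideal m, then every y outside m is a unit
  modulo Q: from 1 = r y + s with s in m and s^k in Q we get 1 - y w = s^k.\<close>

lemma unit_modulo:
  fixes Q m :: "'a::comm_ring_1 set"
  assumes mx: "maximal_ideal m" and sub: "m \<subseteq> radical Q" and y: "y \<notin> m"
  shows "\<exists>w. 1 - y * w \<in> Q"
proof -
  define I where "I = {r * y + s | r s. s \<in> m}"
  have m: "is_ideal m" using mx unfolding maximal_ideal_def by auto
  have "is_ideal I"
    unfolding is_ideal_def I_def
  proof (intro conjI ballI allI)
    show "0 \<in> {r * y + s |r s. s \<in> m}"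
      using m unfolding is_ideal_def by (intro CollectI exI[of _ 0]) simp
  next
    fix a b assume "a \<in> {r * y + s |r s. s \<in> m}" "b \<in> {r * y + s |r s. s \<in> m}"
    then obtain r1 s1 r2 s2 where "a = r1 * y + s1" "b = r2 * y + s2" "s1 \<in> m" "s2 \<in> m" by auto
    moreover have "s1 + s2 \<in> m" using m \<open>s1 \<in> m\<close> \<open>s2 \<in> m\<close> unfolding is_ideal_def by blast
    ultimately show "a + b \<in> {r * y + s |r s. s \<in> m}"
      by (intro CollectI exI[of _ "r1 + r2"] exI[of _ "s1 + s2"]) (simp add: algebra_simps)
  next
    fix t a assume "a \<in> {r * y + s |r s. s \<in> m}"
    then obtain r s where "a = r * y + s" "s \<in> m" by auto
    moreover have "t * s \<in> m" using m \<open>s \<in> m\<close> unfolding is_ideal_def by blast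
    ultimately show "t * a \<in> {r * y + s |r s. s \<in> m}"
      by (intro CollectI exI[of _ "t * r"] exI[of _ "t * s"]) (simp add: algebra_simps)
  qed
  moreover have "m \<subseteq> I" unfolding I_def by (force intro: exI[of _ 0])
  moreover have "y \<in> I" unfolding I_def using m unfolding is_ideal_def by (force intro: exI[of _ 1])
  ultimately have "1 \<in> I" using mx y unfolding maximal_ideal_def by blast
  then obtain r s where rs: "1 = r * y + s" "s \<in> m" unfolding I_def by auto
  then obtain k where sk: "s ^ k \<in> Q" using sub unfolding radical_def by auto
  have "y * r = 1 - s" using rs(1) by (simp add: mult.commute eq_diff_eq)
  then have "y * (r * (\<Sum>i<k. s ^ i)) = (1 - s) * (\<Sum>i<k. s ^ i)"
    by (simp add: mult.assoc[symmetric])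
  also have "\<dots> = 1 - s ^ k" by (rule one_diff_power_eq[symmetric])
  finally have "1 - y * (r * (\<Sum>i<k. s ^ i)) = s ^ k" by simp
  then show ?thesis using sk by metis
qed

lemma primary_of_radical_above_maximal:
  fixes Q m :: "'a::comm_ring_1 set"
  assumes Q: "is_ideal Q" and proper: "Q \<noteq> UNIV" and mx: "maximal_ideal m"
    and sub: "m \<subseteq> radical Q"
  shows "primary_to m Q"
proof -
  have one: "1 \<notin> Q"
    using Q proper unfolding is_ideal_def by (metis UNIV_eq_I mult.right_neutral)
  have in_Q_if_unit_mod: "x \<in> Q" if "1 - y * w \<in> Q" "x * y \<in> Q" for x y w
  proof -
    have "x = x * (1 - y * w) + w * (x * y)" by (simp add: algebra_simps)
    then show ?thesis using that Q unfolding is_ideal_def by (metis mult.commute)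
  qed
  have rad: "radical Q \<subseteq> m"
  proof
    fix x assume "x \<in> radical Q"
    then obtain n where xn: "x ^ n \<in> Q" unfolding radical_def by auto
    show "x \<in> m"
    proof (rule ccontr)
      assume "x \<notin> m"
      then obtain w where w: "1 - x * w \<in> Q" using unit_modulo[OF mx sub] by blast
      have "x ^ k \<in> Q \<Longrightarrow> 1 \<in> Q" for k
      proof (induction k)
        case (Suc k)
        then show ?case using in_Q_if_unit_mod[OF w, of "x ^ k"] by (simp add: mult.commute)
      qed simp
      then show False using xn one by blast
    qed
  qed
  have "\<exists>n. y ^ n \<in> Q" if "x * y \<in> Q" "x \<notin> Q" for x y
  proof (cases "y \<in> m")
    case True then show ?thesis using sub unfolding radical_def by auto
  next
    case False
    then show ?thesis using unit_modulo[OF mx sub] in_Q_if_unit_mod that by blast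
  qed
  then show ?thesis unfolding primary_to_def using Q proper rad sub by blast
qed

lemma primary_subset: "primary_to m Q \<Longrightarrow> Q \<subseteq> m"
  unfolding primary_to_def radical_def by (force intro: exI[of _ 1])

lemma pcompose_monom: "pcompose (monom a n) q = smult a (q ^ n)"
  by (induction n) (simp_all add: monom_0 monom_Suc pcompose_pCons)

section \<open>Subalgebras of a polynomial ring containing the constants\<close>

locale poly_subalgebra =
  fixes B :: "'a::comm_ring_1 poly set"
  assumes const_mem: "[:a:] \<in> B"
    and add_mem: "p \<in> B \<Longrightarrow> q \<in> B \<Longrightarrow> p + q \<in> B"
    and mult_mem: "p \<in> B \<Longrightarrow> q \<in> B \<Longrightarrow> p * q \<in> B"
begin

lemma zero_mem: "0 \<in> B"
  using const_mem[of 0] by simp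

lemma smult_mem: "p \<in> B \<Longrightarrow> smult a p \<in> B"
  using mult_mem[OF const_mem] by simp

lemma diff_mem: "p \<in> B \<Longrightarrow> q \<in> B \<Longrightarrow> p - q \<in> B"
  using add_mem smult_mem[of q "-1"] by (metis diff_conv_add_uminus smult_minus_left smult_1_left)

lemma sum_mem: "(\<And>i. i \<in> A \<Longrightarrow> f i \<in> B) \<Longrightarrow> sum f A \<in> B"
  by (induction A rule: infinite_finite_induct) (auto simp: zero_mem add_mem)

definition piece :: "nat \<Rightarrow> 'a set" where
  "piece \<nu> = {a. monom a \<nu> \<in> B}"

lemma piece_ideal: "is_ideal (piece \<nu>)"
  unfolding is_ideal_def piece_def
  using zero_mem add_mem smult_mem by (simp add: add_monom[symmetric] smult_monom[symmetric])

lemma piece_0: "piece 0 = UNIV"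
  unfolding piece_def using const_mem by (simp add: monom_0)

lemma graded_description:
  assumes components: "\<And>p i. p \<in> B \<Longrightarrow> monom (coeff p i) i \<in> B"
  shows "B = {p. \<forall>\<nu>\<ge>1. coeff p \<nu> \<in> piece \<nu>}"
proof
  show "B \<subseteq> {p. \<forall>\<nu>\<ge>1. coeff p \<nu> \<in> piece \<nu>}"
    using components unfolding piece_def by blast
next
  show "{p. \<forall>\<nu>\<ge>1. coeff p \<nu> \<in> piece \<nu>} \<subseteq> B"
  proof
    fix p assume "p \<in> {p. \<forall>\<nu>\<ge>1. coeff p \<nu> \<in> piece \<nu>}"
    then have "coeff p i \<in> piece i" for i
      using piece_0 by (cases "i = 0") auto
    then have "(\<Sum>i\<le>degree p. monom (coeff p i) i) \<in> B"
      unfolding piece_def by (intro sum_mem) simp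
    then show "p \<in> B" by (simp add: poly_as_sum_of_monoms)
  qed
qed

text \<open>If the indeterminate t lies in B, then B is the whole polynomial ring.\<close>

lemma piece_1_proper:
  assumes "B \<noteq> UNIV"
  shows "piece 1 \<noteq> UNIV"
proof
  assume "piece 1 = UNIV"
  then have t: "monom 1 1 \<in> B" unfolding piece_def by auto
  have "monom 1 1 ^ k \<in> B" for k
    by (induction k) (use const_mem[of 1] mult_mem[OF t] in \<open>simp_all add: one_pCons\<close>)
  moreover have "smult a (monom 1 1 ^ k) = monom a k" for a k
    by (simp add: monom_power smult_monom)
  ultimately have "monom a k \<in> B" for a k
    using smult_mem by metis
  then have "p \<in> B" for p
    by (subst poly_as_sum_of_monoms[symmetric]) (intro sum_mem)
  then show False using assms by blast
qed

end

section \<open>Weight decomposition under the dilation t -> 2t\<close>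

text \<open>The dilation t -> 2t multiplies a t^n by 2^n.  Applying (dilation - 2^j) for all j
  in J multiplies the n-th coefficient by the product of (2^n - 2^j).\<close>

lemma (in poly_subalgebra) dilation_filter:
  assumes dil: "\<And>p. p \<in> B \<Longrightarrow> pcompose p [:0, 2:] \<in> B"
    and J: "finite J" and p: "p \<in> B"
  shows "\<exists>q\<in>B. \<forall>n. coeff q n = (\<Prod>j\<in>J. (2 ^ n - 2 ^ j)) * coeff p n"
  using J
proof (induction J rule: finite_induct)
  case empty then show ?case using p by auto
next
  case (insert j J)
  then obtain q where q: "q \<in> B" "\<forall>n. coeff q n = (\<Prod>j\<in>J. (2 ^ n - 2 ^ j)) * coeff p n"
    by blast
  have "pcompose q [:0, 2:] - smult (2 ^ j) q \<in> B"
    using q(1) dil smult_mem diff_mem by blast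
  moreover have "\<forall>n. coeff (pcompose q [:0, 2:] - smult (2 ^ j) q) n
      = (\<Prod>j\<in>insert j J. (2 ^ n - 2 ^ j)) * coeff p n"
    using q(2) insert(1,2) by (simp add: coeff_pcompose_linear algebra_simps)
  ultimately show ?case by blast
qed

text \<open>Hence, when nonzero integers are invertible, B contains the homogeneous components of
  its elements: the filter over J = {0..deg p} - {i} kills every coefficient except the
  i-th, which it multiplies by a nonzero integer.\<close>

lemma (in poly_subalgebra) homogeneous_components:
  assumes dil: "\<And>p. p \<in> B \<Longrightarrow> pcompose p [:0, 2:] \<in> B"
    and units: "\<And>K::int. K \<noteq> 0 \<Longrightarrow> \<exists>u::'a. u * of_int K = 1"
    and p: "p \<in> B"
  shows "monom (coeff p i) i \<in> B"
proof -
  define J where "J = {0..degree p} - {i}"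
  have fJ: "finite J" unfolding J_def by simp
  obtain q where q: "q \<in> B" "\<forall>n. coeff q n = (\<Prod>j\<in>J. (2 ^ n - 2 ^ j)) * coeff p n"
    using dilation_filter[OF dil fJ p] by blast
  define K :: int where "K = (\<Prod>j\<in>J. (2 ^ i - 2 ^ j))"
  have "K \<noteq> 0" unfolding K_def using fJ by (subst prod_zero_iff) (auto simp: J_def)
  then obtain u :: 'a where u: "u * of_int K = 1" using units by blast
  have qi: "coeff q i = of_int K * coeff p i" using q(2) unfolding K_def by simp
  have qn: "coeff q n = 0" if "n \<noteq> i" for n
  proof (cases "n \<le> degree p")
    case True
    then have "n \<in> J" using that unfolding J_def by auto
    then have "(\<Prod>j\<in>J. (2 ^ n - 2 ^ j) :: 'a) = 0" using fJ by (intro prod_zero) auto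
    then show ?thesis using q(2) by simp
  next
    case False then show ?thesis using q(2) by (simp add: coeff_eq_0)
  qed
  have "smult u q = monom (coeff p i) i"
    by (rule poly_eqI) (use qi qn u in \<open>auto simp: mult.assoc[symmetric]\<close>)
  then show ?thesis using smult_mem[OF q(1)] by metis
qed

text \<open>Under translation t -> t + 1, a t^(nu+1) has t^nu-component (nu+1) a t^nu; dividing
  by nu+1 shows that the pieces decrease.\<close>

lemma (in poly_subalgebra) piece_Suc_subset:
  assumes components: "\<And>p i. p \<in> B \<Longrightarrow> monom (coeff p i) i \<in> B"
    and transl: "\<And>p. p \<in> B \<Longrightarrow> pcompose p [:1, 1:] \<in> B"
    and units: "\<And>K::int. K \<noteq> 0 \<Longrightarrow> \<exists>u::'a. u * of_int K = 1"
  shows "piece (Suc \<nu>) \<subseteq> piece \<nu>"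
proof
  fix a assume "a \<in> piece (Suc \<nu>)"
  then have "pcompose (monom a (Suc \<nu>)) [:1, 1:] \<in> B" unfolding piece_def using transl by simp
  then have "smult a ([:1, 1:] ^ Suc \<nu>) \<in> B" by (simp add: pcompose_monom)
  moreover have "coeff ([:1, 1:] ^ Suc \<nu>) \<nu> = (of_nat (Suc \<nu>) :: 'a)"
    using coeff_linear_poly_power[of \<nu> "Suc \<nu>" "1::'a" 1]
    by (simp add: binomial_Suc_n del: power_Suc)
  ultimately have "monom (a * of_nat (Suc \<nu>)) \<nu> \<in> B"
    using components[of "smult a ([:1, 1:] ^ Suc \<nu>)" \<nu>] by simp
  then have "smult u (monom (a * of_nat (Suc \<nu>)) \<nu>) \<in> B" for u
    by (rule smult_mem)
  moreover obtain u :: 'a where u: "u * of_nat (Suc \<nu>) = 1"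
    using units[of "int (Suc \<nu>)"] by auto
  ultimately have "monom (u * (a * of_nat (Suc \<nu>))) \<nu> \<in> B" by (simp add: smult_monom)
  moreover have "u * (a * of_nat (Suc \<nu>)) = a"
    using u by (metis mult.left_commute mult.right_neutral)
  ultimately show "a \<in> piece \<nu>" unfolding piece_def by simp
qed

lemma affine_extension_subalgebra:
  assumes "affine_extension_trivial c m B"
  shows "poly_subalgebra B"
proof -
  obtain G where G: "subalg_gen (\<lambda>z. [:c z:]) G = B"
    using assms unfolding affine_extension_trivial_def fg_algebra_def by blast
  show ?thesis
  proof
    show "[:a:] \<in> B" for a using assms unfolding affine_extension_trivial_def by blast
    show "p + q \<in> B" if "p \<in> B" "q \<in> B" for p q using that G subalg_gen.add by metis
    show "p * q \<in> B" if "p \<in> B" "q \<in> B" for p q using that G subalg_gen.mult by metis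
  qed
qed

text \<open>Localisation: S_* = S - {x} is covered by the sets f \<noteq> 0 with f in m, and
  B[1/f] = O(S)[1/f][t]; so every weight piece has radical containing m.\<close>

lemma affine_extension_radical:
  assumes ext: "affine_extension_trivial c m B"
  shows "m \<subseteq> radical (poly_subalgebra.piece B \<nu>)"
proof
  interpret poly_subalgebra B using affine_extension_subalgebra[OF ext] .
  fix f assume "f \<in> m"
  then obtain n where "smult (f ^ n) (monom 1 \<nu>) \<in> B"
    using ext unfolding affine_extension_trivial_def by blast
  then show "f \<in> radical (piece \<nu>)" unfolding radical_def piece_def by (auto simp: smult_monom)
qed

theorem mainTheorem4:
  fixes c :: "complex \<Rightarrow> 'a::idom" and m :: "'a set" and B :: "'a poly set"
  assumes hom: "is_ring_hom_C c"
    and fgA: "fg_algebra c UNIV"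
    and normalA: "integrally_closed (UNIV :: 'a set)"
    and dimA: "krull_dim_is TYPE('a) 2"
    and maxm: "maximal_ideal m"
    and reg: "regular_point m"
    and ext: "affine_extension_trivial c m B"
    and nontriv: "B \<noteq> UNIV"
    and Gm: "vertical_Gm_extends c B"
  shows "(\<exists>M :: nat \<Rightarrow> 'a set.
            (\<forall>\<nu>\<ge>1. primary_to m (M \<nu>)) \<and>
            (\<forall>\<nu>\<ge>1. M (Suc \<nu>) \<subseteq> M \<nu>) \<and>
            B = {p. \<forall>\<nu>\<ge>1. coeff p \<nu> \<in> M \<nu>})
         \<and> second_kind m B"
proof -
  interpret poly_subalgebra B using affine_extension_subalgebra[OF ext] .
  have units: "\<And>K::int. K \<noteq> 0 \<Longrightarrow> \<exists>u::'a. u * of_int K = 1"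
    using ring_hom_C_int_unit[OF hom] by blast
  have "c 2 = 2" using ring_hom_C_of_int[OF hom, of 2] by simp
  then have dil: "\<And>p. p \<in> B \<Longrightarrow> pcompose p [:0, 2:] \<in> B"
    using Gm unfolding vertical_Gm_extends_def by (metis zero_neq_numeral)
  have "c 1 = 1" using hom unfolding is_ring_hom_C_def by simp
  then have transl: "\<And>p. p \<in> B \<Longrightarrow> pcompose p [:1, 1:] \<in> B"
    using ext unfolding affine_extension_trivial_def by metis
  note components = homogeneous_components[OF dil units]
  have B_eq: "B = {p. \<forall>\<nu>\<ge>1. coeff p \<nu> \<in> piece \<nu>}"
    using graded_description components by blast
  have decreasing: "\<And>\<nu>. piece (Suc \<nu>) \<subseteq> piece \<nu>"
    using piece_Suc_subset[OF components transl units] by blast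
  have "piece \<nu> \<subseteq> piece 1" if "\<nu> \<ge> 1" for \<nu>
    using that by (induction \<nu> rule: dec_induct) (use decreasing in blast)+
  then have "piece \<nu> \<noteq> UNIV" if "\<nu> \<ge> 1" for \<nu>
    using that piece_1_proper[OF nontriv] by blast
  then have primary: "\<forall>\<nu>\<ge>1. primary_to m (piece \<nu>)"
    using primary_of_radical_above_maximal[OF piece_ideal _ maxm affine_extension_radical[OF ext]]
    by blast
  then have "second_kind m B"
    unfolding second_kind_def using B_eq primary_subset by blast
  then show ?thesis using primary decreasing B_eq by blast
qed

end
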